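(* Let $s,t,m$ be positive integers with $s\le t$, $s\mid m$, $m\ge t+2$, let $n=m^2$, and let $z=s(\lceil (t+2)/s\rceil-1)$. Let $v(0),\dots,v(m-1)$ be integers with $0\le v(j)\le t-1-(j\bmod s)$ for all $j$ and $v(j)=0$ for $m-z\le j\le m-1$. Starting from any configuration of distinct cell values $c_0,\dots,c_{n-1}$, after the Block Algorithm (described in the context) finishes, for every $j$ with $0\le j\le m-z-1$, \[ \bigl|\{k:\ j<k\le s\lfloor j/s\rfloor+t-1,\ c_k<c_j\}\bigr| = v(j), \] i.e., the block of cells $c_0,\dots,c_{m-1}$ represents the target digits $v(0),\dots,v(m-z-1)$ in the $(s,t,n)$-local rank-modulation factoradic representation.
   Context: Cells $c_0,\dots,c_{n-1}$ are real numbers (indices modulo $n$). For $0\le j\le n-1$ let $l(j)=s\lceil (j-t+1)/s\rceil \bmod n$ and $r(j)=(s\lfloor j/s\rfloor+t-1)\bmod n$. Pushing cell $j$ ("push-to-the-top") replaces $c_j$ by $\max\{c_{l(j)},c_{l(j)+1},\dots,c_{r(j)}\}+1$ (indices cyclic), leaving other cells unchanged. For $0\le j\le m-3$ define $l'(j)=l(j)$ if $0\le l(j)\le m-3$ and $l'(j)=0$ otherwise, and $r'(j)=r(j)$ if $0\le r(j)\le m-3$ and $r'(j)=m-3$ otherwise. Block Algorithm: (1) push cell $n-1$; (2) set $a_k\leftarrow 0$ for $k=0,\dots,m-3$ and $j\leftarrow 0$; (3) repeat: if $v(j)=\sum_{i=j+1}^{r'(j)}a_i$ and $a_j=0$, then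 push cell $j$, set $a_j\leftarrow 1$ and $j\leftarrow l'(j)$; otherwise set $j\leftarrow j+1$; until $j=m-2$; (4) push cell $m-2$. *)

theory Defs
  imports Complex_Main
begin

text \<open>Parameters: n = number of cells, s, t of the (s,t,n)-local scheme, m = block length.
  Cells are c 0, ..., c (n-1) (a function nat => real; values outside {..<n} are irrelevant).\<close>

definition lidx :: "nat \<Rightarrow> nat \<Rightarrow> nat \<Rightarrow> nat \<Rightarrow> nat" where
  "lidx n s t j = nat ((int s * \<lceil>real_of_int (int j - int t + 1) / real s\<rceil>) mod int n)"

definition ridx :: "nat \<Rightarrow> nat \<Rightarrow> nat \<Rightarrow> nat \<Rightarrow> nat" where
  "ridx n s t j = nat ((int s * \<lfloor>real j / real s\<rfloor> + int t - 1) mod int n)"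

definition window :: "nat \<Rightarrow> nat \<Rightarrow> nat \<Rightarrow> nat \<Rightarrow> nat set" where
  "window n s t j = {(lidx n s t j + i) mod n | i. i \<le> (ridx n s t j + n - lidx n s t j) mod n}"

definition push :: "nat \<Rightarrow> nat \<Rightarrow> nat \<Rightarrow> (nat \<Rightarrow> real) \<Rightarrow> nat \<Rightarrow> (nat \<Rightarrow> real)" where
  "push n s t c j = c(j := Max (c ` window n s t j) + 1)"

definition lprime :: "nat \<Rightarrow> nat \<Rightarrow> nat \<Rightarrow> nat \<Rightarrow> nat \<Rightarrow> nat" where
  "lprime m n s t j = (if lidx n s t j \<le> m - 3 then lidx n s t j else 0)"

definition rprime :: "nat \<Rightarrow> nat \<Rightarrow> nat \<Rightarrow> nat \<Rightarrow> nat \<Rightarrow> nat" where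
  "rprime m n s t j = (if ridx n s t j \<le> m - 3 then ridx n s t j else m - 3)"

text \<open>State of the Block Algorithm: (cells, flags a, loop index j).\<close>
type_synonym bstate = "(nat \<Rightarrow> real) \<times> (nat \<Rightarrow> int) \<times> nat"

text \<open>Initialisation: steps (1) and (2).\<close>
definition block_init :: "nat \<Rightarrow> nat \<Rightarrow> nat \<Rightarrow> (nat \<Rightarrow> real) \<Rightarrow> bstate" where
  "block_init n s t c = (push n s t c (n - 1), (\<lambda>_. 0), 0)"

text \<open>One iteration of the body of the repeat loop in step (3).\<close>
definition block_step :: "nat \<Rightarrow> nat \<Rightarrow> nat \<Rightarrow> nat \<Rightarrow> (nat \<Rightarrow> int) \<Rightarrow> bstate \<Rightarrow> bstate" where
  "block_step m n s t v st = (case st of (c, a, j) \<Rightarrow>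
     (if v j = (\<Sum>i\<in>{j+1..rprime m n s t j}. a i) \<and> a j = 0
      then (push n s t c j, a(j := 1), lprime m n s t j)
      else (c, a, j + 1)))"

definition block_iter :: "nat \<Rightarrow> nat \<Rightarrow> nat \<Rightarrow> nat \<Rightarrow> (nat \<Rightarrow> int) \<Rightarrow> (nat \<Rightarrow> real) \<Rightarrow> nat \<Rightarrow> bstate" where
  "block_iter m n s t v c k = (block_step m n s t v ^^ k) (block_init n s t c)"

end

theory Submission
  imports Defs
begin

text \<open>Call a cell flagged once step (3) has pushed it. The loop keeps every flagged cell j
  with exactly v(j) smaller flagged cells among j+1, ..., r(j). Pushing p puts it above its whole
  window, which contains its range, so p sees exactly its flag sum v(p) below it; and p lands above
  any flagged cell i whose range contains p, because i then lies in the window of p, so the count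
  of i is unchanged. A cell is skipped only while its flag sum is below its digit. The measure
  (number of unflagged cells, m - 2 - j), ordered lexicographically, decreases, so the loop stops;
  then an unflagged cell of maximal index would have its whole range flagged, i.e. flag sum
  r'(i) - i \<ge> v(i), and would not have been skipped. Hence all cells are flagged, and for j < m - z
  the range of j stays inside the block, out of reach of the final push of cell m - 2.\<close>

lemma mem_cyclic_interval:
  fixes l r :: int and x N :: nat
  assumes "0 < N" "l \<le> int x" "int x \<le> r" "r - l < int N" "x < N"
  shows "x \<in> {(nat (l mod int N) + i) mod N | i. i \<le> (nat (r mod int N) + N - nat (l mod int N)) mod N}"
proof -
  define i where "i = nat (int x - l)"
  have lm: "0 \<le> l mod int N" "l mod int N < int N" and rm: "0 \<le> r mod int N" "r mod int N < int N"
    using assms by auto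
  have "int ((nat (l mod int N) + i) mod N) = (l mod int N + (int x - l)) mod int N"
    using lm assms unfolding i_def by (simp add: zmod_int)
  also have "\<dots> = int x" using assms by (simp add: mod_simps)
  finally have start: "(nat (l mod int N) + i) mod N = x" by simp
  have "int (nat (r mod int N) + N - nat (l mod int N)) = (r mod int N - l mod int N) + int N"
    using lm rm by linarith
  then have "int ((nat (r mod int N) + N - nat (l mod int N)) mod N) = (r - l) mod int N"
    by (simp add: zmod_int mod_diff_eq)
  also have "\<dots> = r - l" using assms by simp
  finally have "i \<le> (nat (r mod int N) + N - nat (l mod int N)) mod N"
    unfolding i_def using assms by linarith
  then show ?thesis using start by blast
qed

lemma sum_zero_one_eq_card:
  fixes a :: "'a \<Rightarrow> int"
  assumes "finite A" "\<forall>i. a i = 0 \<or> a i = 1"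
  shows "(\<Sum>k\<in>A. a k) = int (card {k\<in>A. a k = 1})"
proof -
  have "(\<Sum>k\<in>A. a k) = (\<Sum>k\<in>A. if a k = 1 then 1 else 0)"
    by (rule sum.cong) (use assms in auto)
  also have "\<dots> = int (card {k\<in>A. a k = 1})"
    using assms(1) by (simp add: sum.If_cases Collect_conj_eq Int_commute Collect_mem_eq)
  finally show ?thesis .
qed

lemma sum_fun_upd:
  fixes a :: "'a \<Rightarrow> 'b::ab_group_add"
  assumes "finite A"
  shows "(\<Sum>k\<in>A. (a(p := x)) k) = (\<Sum>k\<in>A. a k) + (if p \<in> A then x - a p else 0)"
proof -
  have "(\<Sum>k\<in>A. (a(p := x)) k) = (\<Sum>k\<in>A. a k + (if k = p then x - a p else 0))"
    by (rule sum.cong) auto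
  then show ?thesis using assms by (simp add: sum.distrib)
qed

lemma mult_ceiling_divide_bounds:
  fixes x :: int and s :: nat
  assumes "0 < s"
  shows "x \<le> int s * \<lceil>real_of_int x / real s\<rceil>" "int s * \<lceil>real_of_int x / real s\<rceil> < x + int s"
proof -
  define q where "q = \<lceil>real_of_int x / real s\<rceil>"
  have "real_of_int x / real s \<le> of_int q" "of_int q - 1 < real_of_int x / real s"
    unfolding q_def using ceiling_correct by auto
  then have "real_of_int x \<le> real_of_int (int s * q)" "real_of_int (int s * (q - 1)) < real_of_int x"
    using assms by (simp_all add: pos_divide_le_eq pos_less_divide_eq mult.commute)
  then show "x \<le> int s * q" "int s * q < x + int s"
    unfolding of_int_le_iff of_int_less_iff by (simp_all add: algebra_simps)
qed

lemma finite_window: "finite (window n s t k)"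
  unfolding window_def by (rule finite_image_set) simp

lemma push_gt_window: "y \<in> window n s t k \<Longrightarrow> c y < push n s t c k k"
  using Max_ge[OF finite_imageI[OF finite_window], of "c y" c n s t k] unfolding push_def by simp

lemma push_apply_other: "y \<noteq> k \<Longrightarrow> push n s t c k y = c y"
  unfolding push_def by simp

locale block_setting =
  fixes s t m n :: nat and v :: "nat \<Rightarrow> int"
  assumes s_pos: "0 < s" and t_pos: "0 < t" and s_le_t: "s \<le> t" and s_dvd_m: "s dvd m"
    and t_le_m: "t + 2 \<le> m" and n_eq: "n = m ^ 2"
    and v_bounds: "\<forall>j<m. 0 \<le> v j \<and> v j \<le> int t - 1 - int (j mod s)"
    and v_tail: "\<forall>j. int m - int s * (\<lceil>real (t + 2) / real s\<rceil> - 1) \<le> int j \<and> j \<le> m - 1 \<longrightarrow> v j = 0"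
begin

text \<open>The ends r(j) and l(j) of the window before reduction mod n, and tail_start = m - z. Since
  n = m^2 > 2m, for cells of the block this reduction only matters when l(j) is negative.\<close>

definition block_end :: "nat \<Rightarrow> nat" where
  "block_end i = s * (i div s) + t - 1"

definition left_end :: "nat \<Rightarrow> int" where
  "left_end k = int s * \<lceil>real_of_int (int k - int t + 1) / real s\<rceil>"

definition tail_start :: int where
  "tail_start = int m - int s * (\<lceil>real (t + 2) / real s\<rceil> - 1)"

abbreviation rp :: "nat \<Rightarrow> nat" where
  "rp \<equiv> rprime m n s t"

lemma three_le_m: "3 \<le> m"
  using t_le_m t_pos by linarith

lemma double_m_less_n: "2 * m < n"
proof -
  have "3 * m \<le> m * m" using three_le_m by simp
  then show ?thesis using n_eq three_le_m by (simp add: power2_eq_square)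
qed

lemma int_block_end: "int (block_end i) = int s * \<lfloor>real i / real s\<rfloor> + int t - 1"
  unfolding block_end_def using t_pos by (simp add: floor_divide_of_nat_eq)

lemma block_end_minus: "block_end i - i = t - 1 - i mod s"
  using mult_div_mod_eq[of s i] mod_less_divisor[OF s_pos, of i] s_le_t
  unfolding block_end_def by linarith

lemma le_block_end: "i \<le> block_end i"
  using mult_div_mod_eq[of s i] mod_less_divisor[OF s_pos, of i] s_le_t
  unfolding block_end_def by linarith

lemma block_end_le: "block_end i \<le> i + t - 1"
  unfolding block_end_def using t_pos by (simp add: add.commute le_diff_conv2 minus_mod_eq_mult_div [symmetric])

lemma block_end_le_iff: "block_end i \<le> m - 3 \<longleftrightarrow> int i < tail_start"
proof -
  define q where "q = \<lceil>real (t + 2) / real s\<rceil>"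
  obtain M where M: "m = s * M" using s_dvd_m by blast
  define d where "d = i div s"
  have "s * d \<le> i" "i < s * d + s"
    unfolding d_def using mult_div_mod_eq[of s i] mod_less_divisor[OF s_pos, of i] by linarith+
  then have d: "int s * int d \<le> int i" "int i < int s * int d + int s"
    by (simp_all flip: of_nat_mult of_nat_add)
  have "block_end i \<le> m - 3 \<longleftrightarrow> s * d + t + 2 \<le> s * M"
    unfolding block_end_def d_def[symmetric] M[symmetric] using t_pos three_le_m by linarith
  also have "\<dots> \<longleftrightarrow> int t + 2 \<le> int s * (int M - int d)"
    by (subst of_nat_le_iff[symmetric, where 'a=int]) (simp add: algebra_simps)
  also have "\<dots> \<longleftrightarrow> real_of_int (int t + 2) \<le> real_of_int (int s * (int M - int d))"
    by (rule of_int_le_iff[symmetric])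
  also have "\<dots> \<longleftrightarrow> real (t + 2) / real s \<le> real_of_int (int M - int d)"
    using s_pos by (simp add: pos_divide_le_eq mult.commute add.commute)
  also have "\<dots> \<longleftrightarrow> q \<le> int M - int d"
    unfolding q_def by (rule ceiling_le_iff[symmetric])
  also have "\<dots> \<longleftrightarrow> int i < int s * (int M - q + 1)"
  proof
    assume "q \<le> int M - int d"
    then have "int s * (int d + 1) \<le> int s * (int M - q + 1)" using s_pos by (intro mult_left_mono) auto
    then show "int i < int s * (int M - q + 1)" using d by (simp add: algebra_simps)
  next
    assume "int i < int s * (int M - q + 1)"
    then have "int s * int d < int s * (int M - q + 1)" using d by linarith
    then show "q \<le> int M - int d" using s_pos by (simp add: mult_less_cancel_left)
  qed
  also have "\<dots> \<longleftrightarrow> int i < tail_start"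
    unfolding tail_start_def q_def[symmetric] by (simp add: M algebra_simps)
  finally show ?thesis .
qed

lemma ridx_eq_block_end: "i \<le> m - 3 \<Longrightarrow> ridx n s t i = block_end i"
  using block_end_le[of i] double_m_less_n t_le_m int_block_end[of i]
  unfolding ridx_def by (simp flip: int_block_end)

lemma left_end_bounds: "int k - int t + 1 \<le> left_end k" "left_end k \<le> int k"
  using mult_ceiling_divide_bounds[OF s_pos, of "int k - int t + 1"] s_le_t
  unfolding left_end_def by linarith+

lemma left_end_le: assumes "k \<le> block_end i" shows "left_end k \<le> int i"
proof -
  have "k + 1 \<le> s * (i div s) + t"
    using assms t_pos unfolding block_end_def by linarith
  then have "int (k + 1) \<le> int (s * (i div s) + t)"
    by (simp only: of_nat_le_iff)
  then have "int k - int t + 1 \<le> int s * int (i div s)"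
    by simp
  then have "real_of_int (int k - int t + 1) \<le> real_of_int (int s * int (i div s))"
    by (simp only: of_int_le_iff)
  then have "real_of_int (int k - int t + 1) / real s \<le> real (i div s)"
    using s_pos by (simp add: pos_divide_le_eq mult.commute)
  then have "left_end k \<le> int s * int (i div s)"
    unfolding left_end_def using s_pos by (simp add: ceiling_le_iff)
  also have "\<dots> \<le> int i"
    by (metis of_nat_le_iff of_nat_mult times_div_less_eq_dividend)
  finally show ?thesis .
qed

lemma lidx_eq_left_end: "lidx n s t k = nat (left_end k mod int n)"
  unfolding lidx_def left_end_def by simp

lemma lidx_cases:
  assumes "k \<le> m - 3"
  obtains "0 \<le> left_end k" "lidx n s t k = nat (left_end k)"
  | "left_end k < 0" "m - 3 < lidx n s t k"
proof (cases "0 \<le> left_end k")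
  case True
  have "left_end k < int n" using left_end_bounds(2)[of k] assms double_m_less_n by linarith
  with True that(1) show ?thesis by (simp add: lidx_eq_left_end)
next
  case False
  have lo: "int k - int t + 1 \<le> left_end k" by (rule left_end_bounds)
  have "0 \<le> left_end k + int n" "left_end k + int n < int n"
    using lo False double_m_less_n t_le_m by linarith+
  then have "(left_end k + int n) mod int n = left_end k + int n"
    by (rule mod_pos_pos_trivial)
  then have "left_end k mod int n = left_end k + int n"
    by simp
  moreover have "int (m - 3) < left_end k + int n" using lo double_m_less_n t_le_m by linarith
  ultimately show ?thesis using False that(2) by (simp add: lidx_eq_left_end zless_nat_eq_int_zless)
qed

lemma lprime_le: assumes "k \<le> m - 3" shows "lprime m n s t k \<le> k"
  using left_end_bounds(2)[of k] unfolding lprime_def by (cases rule: lidx_cases[OF assms]) auto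

lemma block_end_less_of_less_lprime:
  assumes "k \<le> m - 3" "i < lprime m n s t k"
  shows "block_end i < k"
proof -
  have "lidx n s t k \<le> m - 3" "lprime m n s t k = lidx n s t k"
    using assms(2) unfolding lprime_def by (auto split: if_splits)
  then have "lprime m n s t k = nat (left_end k) \<and> 0 \<le> left_end k"
    by (cases rule: lidx_cases[OF assms(1)]) auto
  then have "int i < left_end k" using assms(2) by linarith
  then show ?thesis using left_end_le[of k i] by linarith
qed

lemma rprime_bounds:
  assumes "i \<le> m - 3"
  shows "i \<le> rp i" "rp i \<le> block_end i" "rp i \<le> m - 3"
  using ridx_eq_block_end[OF assms] le_block_end[of i] assms unfolding rprime_def by auto

lemma rprime_eq_block_end: "block_end i \<le> m - 3 \<Longrightarrow> rp i = block_end i"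
  using ridx_eq_block_end le_block_end[of i] unfolding rprime_def by auto

lemma mem_window:
  assumes "k \<le> m - 3" "left_end k \<le> int x" "x \<le> block_end k"
  shows "x \<in> window n s t k"
proof -
  have Rn: "block_end k < n" using block_end_le[of k] assms double_m_less_n t_le_m by linarith
  have "int (block_end k) - left_end k < int n"
    using block_end_le[of k] left_end_bounds(1)[of k] double_m_less_n t_le_m t_pos assms by linarith
  then have "x \<in> {(nat (left_end k mod int n) + i) mod n | i.
      i \<le> (nat (int (block_end k) mod int n) + n - nat (left_end k mod int n)) mod n}"
    using mem_cyclic_interval[of n "left_end k" x "int (block_end k)"] assms Rn double_m_less_n by simp
  then show ?thesis using Rn unfolding window_def lidx_eq_left_end ridx_eq_block_end[OF assms(1)] by simp
qed

definition flag_sum :: "(nat \<Rightarrow> int) \<Rightarrow> nat \<Rightarrow> int" where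
  "flag_sum a i = (\<Sum>k\<in>{i+1..rp i}. a k)"

definition rank_among_flagged :: "(nat \<Rightarrow> real) \<Rightarrow> (nat \<Rightarrow> int) \<Rightarrow> nat \<Rightarrow> nat" where
  "rank_among_flagged c a i = card {k\<in>{i+1..rp i}. a k = 1 \<and> c k < c i}"

definition block_inv :: "bstate \<Rightarrow> bool" where
  "block_inv st = (case st of (c, a, p) \<Rightarrow> p \<le> m - 2
     \<and> (\<forall>i. a i = 0 \<or> a i = 1) \<and> (\<forall>i. a i \<noteq> 0 \<longrightarrow> i \<le> m - 3)
     \<and> (\<forall>i<p. a i = 0 \<longrightarrow> flag_sum a i < v i) \<and> (\<forall>i\<le>m-3. a i = 0 \<longrightarrow> flag_sum a i \<le> v i)
     \<and> (\<forall>i. a i = 1 \<longrightarrow> int (rank_among_flagged c a i) = v i))"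

text \<open>A push may move the index back by up to m - 2, but it also flags a cell, which weighs m.\<close>

definition block_measure :: "bstate \<Rightarrow> nat" where
  "block_measure st = (case st of (c, a, p) \<Rightarrow> m * card {i. i \<le> m - 3 \<and> a i = 0} + (m - 2 - p))"

lemma flag_sum_upd:
  assumes "a p = 0"
  shows "flag_sum (a(p := 1)) i = flag_sum a i + (if p \<in> {i+1..rp i} then 1 else 0)"
  using assms unfolding flag_sum_def sum_fun_upd[OF finite_atLeastAtMost] by simp

lemma rank_of_pushed_cell:
  assumes "\<forall>i. a i = 0 \<or> a i = 1" "p \<le> m - 3"
  shows "int (rank_among_flagged (push n s t c p) (a(p := 1)) p) = flag_sum a p"
proof -
  have "k \<in> window n s t p" if "k \<in> {p+1..rp p}" for k
    using mem_window[OF assms(2)] left_end_bounds(2)[of p] rprime_bounds(2)[OF assms(2)] that by force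
  then have "{k\<in>{p+1..rp p}. (a(p := 1)) k = 1 \<and> push n s t c p k < push n s t c p p}
      = {k\<in>{p+1..rp p}. a k = 1}"
    by (auto simp: push_apply_other push_gt_window)
  then show ?thesis
    unfolding rank_among_flagged_def flag_sum_def using sum_zero_one_eq_card[OF _ assms(1)] by simp
qed

lemma rank_of_other_cell:
  assumes "p \<le> m - 3" "i \<le> m - 3" "i \<noteq> p" "a p = 0"
  shows "rank_among_flagged (push n s t c p) (a(p := 1)) i = rank_among_flagged c a i"
proof -
  have "i \<in> window n s t p" if "p \<in> {i+1..rp i}"
  proof -
    have "left_end p \<le> int i" using that rprime_bounds(2)[OF assms(2)] left_end_le by auto
    moreover have "i \<le> block_end p" using that le_block_end[of p] by auto
    ultimately show ?thesis using mem_window[OF assms(1)] by blast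
  qed
  then have "{k\<in>{i+1..rp i}. (a(p := 1)) k = 1 \<and> push n s t c p k < push n s t c p i}
      = {k\<in>{i+1..rp i}. a k = 1 \<and> c k < c i}"
    using assms(3,4) push_gt_window[of i n s t p c] by (auto simp: push_apply_other)
  then show ?thesis unfolding rank_among_flagged_def by simp
qed

lemma block_inv_push:
  assumes inv: "block_inv (c, a, p)" and p: "p \<le> m - 3" and ready: "v p = flag_sum a p" "a p = 0"
  shows "block_inv (push n s t c p, a(p := 1), lprime m n s t p)"
proof -
  from inv have a01: "\<forall>i. a i = 0 \<or> a i = 1" and supp: "\<forall>i. a i \<noteq> 0 \<longrightarrow> i \<le> m - 3"
    and not_ready: "\<forall>i<p. a i = 0 \<longrightarrow> flag_sum a i < v i"
    and not_overdue: "\<forall>i\<le>m-3. a i = 0 \<longrightarrow> flag_sum a i \<le> v i"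
    and ranked: "\<forall>i. a i = 1 \<longrightarrow> int (rank_among_flagged c a i) = v i"
    unfolding block_inv_def by auto
  have lp: "lprime m n s t p \<le> p" using lprime_le[OF p] .
  have "flag_sum (a(p := 1)) i < v i" if "i < lprime m n s t p" "a i = 0" for i
  proof -
    have "block_end i < p" using block_end_less_of_less_lprime[OF p that(1)] .
    then have "p \<notin> {i+1..rp i}" using rprime_bounds(2)[of i] that(1) lp p by fastforce
    then show ?thesis using flag_sum_upd[where a = a and p = p and i = i, OF ready(2)] not_ready that lp by auto
  qed
  moreover have "flag_sum (a(p := 1)) i \<le> v i" if "i \<le> m - 3" "i \<noteq> p" "a i = 0" for i
  proof (cases "p \<in> {i+1..rp i}")
    case True
    then have "flag_sum a i < v i" using not_ready that by auto
    then show ?thesis using flag_sum_upd[where a = a and p = p and i = i, OF ready(2)] True by simp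
  next
    case False
    then show ?thesis using flag_sum_upd[where a = a and p = p and i = i, OF ready(2)] not_overdue that by auto
  qed
  moreover have "int (rank_among_flagged (push n s t c p) (a(p := 1)) i) = v i" if "(a(p := 1)) i = 1" for i
  proof (cases "i = p")
    case True
    then show ?thesis using rank_of_pushed_cell[OF a01 p] ready(1) by simp
  next
    case False
    then have "a i = 1" using that by simp
    then show ?thesis using rank_of_other_cell[where a = a and c = c, OF p _ False ready(2)] ranked supp
      by simp
  qed
  ultimately show ?thesis
    using a01 supp lp p unfolding block_inv_def by auto
qed

lemma block_measure_push_less:
  assumes "p \<le> m - 3" "a p = 0"
  shows "block_measure (c', a(p := 1), p') < block_measure (c, a, p)"
proof -
  define U where "U = {i. i \<le> m - 3 \<and> a i = 0}"
  have "p \<in> U" "finite U" unfolding U_def using assms by simp_all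
  moreover have "{i. i \<le> m - 3 \<and> (a(p := 1)) i = 0} = U - {p}" unfolding U_def by auto
  ultimately have "block_measure (c', a(p := 1), p') < m * (card U - 1) + m"
    unfolding block_measure_def using three_le_m by simp
  also have "\<dots> = m * card U" using \<open>p \<in> U\<close> \<open>finite U\<close> card_gt_0_iff
    by (metis Suc_diff_1 emptyE mult_Suc_right add.commute)
  also have "\<dots> \<le> block_measure (c, a, p)" unfolding block_measure_def U_def by simp
  finally show ?thesis .
qed

lemma block_inv_skip:
  assumes inv: "block_inv (c, a, p)" and p: "p \<le> m - 3" and skip: "\<not> (v p = flag_sum a p \<and> a p = 0)"
  shows "block_inv (c, a, p + 1)"
proof -
  have "flag_sum a p < v p" if "a p = 0"
    using inv p skip that unfolding block_inv_def by fastforce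
  then show ?thesis using inv p three_le_m unfolding block_inv_def by (auto simp: less_Suc_eq)
qed

lemma block_step_inv:
  assumes inv: "block_inv st" and running: "snd (snd st) \<noteq> m - 2"
  shows "block_inv (block_step m n s t v st) \<and> block_measure (block_step m n s t v st) < block_measure st"
proof -
  obtain c a p where st: "st = (c, a, p)" by (cases st)
  have p: "p \<le> m - 3" using inv running st unfolding block_inv_def by auto
  show ?thesis
  proof (cases "v p = flag_sum a p \<and> a p = 0")
    case True
    then show ?thesis
      using block_inv_push[OF inv[unfolded st] p] block_measure_push_less[OF p]
      unfolding st block_step_def flag_sum_def by auto
  next
    case False
    then have "block_measure (c, a, p + 1) < block_measure (c, a, p)"
      using p three_le_m unfolding block_measure_def by simp
    then show ?thesis
      using False block_inv_skip[OF inv[unfolded st] p]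
      unfolding st block_step_def flag_sum_def by auto
  qed
qed

lemma v_le_rprime_diff:
  assumes i: "i \<le> m - 3"
  shows "v i \<le> int (rp i) - int i"
proof (cases "block_end i \<le> m - 3")
  case True
  have "v i \<le> int t - 1 - int (i mod s)" using v_bounds i three_le_m by simp
  moreover have "i mod s < s" using s_pos by simp
  ultimately show ?thesis using rprime_eq_block_end[OF True] block_end_minus[of i]
    le_block_end[of i] s_le_t by linarith
next
  case False
  then have "v i = 0" using v_tail i block_end_le_iff unfolding tail_start_def by auto
  then show ?thesis using rprime_bounds(1)[OF i] by simp
qed

lemma block_inv_init: "block_inv (block_init n s t c)"
  unfolding block_init_def block_inv_def flag_sum_def rank_among_flagged_def
  using v_bounds three_le_m by auto

lemma block_iter_inv:
  assumes "\<forall>i<k. snd (snd (block_iter m n s t v c i)) \<noteq> m - 2"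
  shows "block_inv (block_iter m n s t v c k)
    \<and> block_measure (block_iter m n s t v c k) + k \<le> block_measure (block_iter m n s t v c 0)"
  using assms
proof (induction k)
  case 0
  then show ?case using block_inv_init by (simp add: block_iter_def)
next
  case (Suc k)
  then show ?case
    using block_step_inv[of "block_iter m n s t v c k"] by (simp add: block_iter_def)
qed

lemma block_iter_terminates: "\<exists>k. snd (snd (block_iter m n s t v c k)) = m - 2"
proof (rule ccontr)
  assume "\<nexists>k. snd (snd (block_iter m n s t v c k)) = m - 2"
  then show False
    using block_iter_inv[of "Suc (block_measure (block_iter m n s t v c 0))" c] by simp
qed

lemma block_inv_final_all_flagged:
  assumes inv: "block_inv (c, a, m - 2)" and i: "i \<le> m - 3"
  shows "a i = 1"
proof (rule ccontr)
  assume "a i \<noteq> 1"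
  from inv have a01: "\<forall>i. a i = 0 \<or> a i = 1"
    and not_ready: "\<forall>i<m-2. a i = 0 \<longrightarrow> flag_sum a i < v i"
    unfolding block_inv_def by auto
  define U where "U = {i. i \<le> m - 3 \<and> a i = 0}"
  have "i \<in> U" "finite U" unfolding U_def using i \<open>a i \<noteq> 1\<close> a01 by auto
  define i0 where "i0 = Max U"
  have "i0 \<in> U" unfolding i0_def using Max_in[OF \<open>finite U\<close>] \<open>i \<in> U\<close> by blast
  then have i0: "i0 \<le> m - 3" "a i0 = 0" unfolding U_def by auto
  have "a k = 1" if "k \<in> {i0+1..rp i0}" for k
  proof -
    have "k \<le> m - 3" using that rprime_bounds(3)[OF i0(1)] by auto
    moreover have "k \<notin> U" using that Max_ge[OF \<open>finite U\<close>, of k] unfolding i0_def by auto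
    ultimately show ?thesis using a01 unfolding U_def by auto
  qed
  then have "flag_sum a i0 = int (rp i0) - int i0"
    using rprime_bounds(1)[OF i0(1)] unfolding flag_sum_def by simp
  moreover have "v i0 \<le> int (rp i0) - int i0" using v_le_rprime_diff[OF i0(1)] .
  moreover have "flag_sum a i0 < v i0"
    using not_ready i0 three_le_m by (simp add: less_diff_conv2)
  ultimately show False by linarith
qed

lemma block_inv_final_rank:
  assumes inv: "block_inv (c, a, m - 2)" and j: "int j < tail_start"
  shows "int (card {k. j < k \<and> int k \<le> int s * \<lfloor>real j / real s\<rfloor> + int t - 1
      \<and> push n s t c (m - 2) k < push n s t c (m - 2) j}) = v j"
proof -
  have end_j: "block_end j \<le> m - 3" using j block_end_le_iff by simp
  then have j3: "j \<le> m - 3" using le_block_end[of j] by linarith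
  have "{k. j < k \<and> int k \<le> int s * \<lfloor>real j / real s\<rfloor> + int t - 1
      \<and> push n s t c (m - 2) k < push n s t c (m - 2) j} = {k\<in>{j+1..rp j}. a k = 1 \<and> c k < c j}"
    using end_j j3 three_le_m block_inv_final_all_flagged[OF inv] rprime_eq_block_end[OF end_j]
    by (auto simp: push_apply_other simp flip: int_block_end)
  then show ?thesis
    using inv block_inv_final_all_flagged[OF inv j3] unfolding block_inv_def rank_among_flagged_def by simp
qed

end

theorem theorem9:
  fixes s t m n :: nat and v :: "nat \<Rightarrow> int" and c :: "nat \<Rightarrow> real"
  assumes "0 < s" "0 < t" "0 < m" "s \<le> t" "s dvd m" "t + 2 \<le> m" "n = m ^ 2"
    and "\<forall>j<m. 0 \<le> v j \<and> v j \<le> int t - 1 - int (j mod s)"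
    and "\<forall>j. int m - int s * (\<lceil>real (t + 2) / real s\<rceil> - 1) \<le> int j \<and> j \<le> m - 1 \<longrightarrow> v j = 0"
    and "inj_on c {..<n}"
  shows "(\<exists>k. snd (snd (block_iter m n s t v c k)) = m - 2) \<and>
    (\<forall>k. snd (snd (block_iter m n s t v c k)) = m - 2 \<and>
         (\<forall>i<k. snd (snd (block_iter m n s t v c i)) \<noteq> m - 2) \<longrightarrow>
       (let c' = push n s t (fst (block_iter m n s t v c k)) (m - 2) in
        \<forall>j. int j \<le> int m - int s * (\<lceil>real (t + 2) / real s\<rceil> - 1) - 1 \<longrightarrow>
          int (card {k. j < k \<and> int k \<le> int s * \<lfloor>real j / real s\<rfloor> + int t - 1 \<and> c' k < c' j})
            = v j))"
proof -
  interpret block_setting s t m n v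
    using assms(1,2,4-9) by unfold_locales auto
  have "block_inv (block_iter m n s t v c k) \<Longrightarrow> snd (snd (block_iter m n s t v c k)) = m - 2 \<Longrightarrow>
      let c' = push n s t (fst (block_iter m n s t v c k)) (m - 2) in
        \<forall>j. int j \<le> tail_start - 1 \<longrightarrow>
          int (card {k. j < k \<and> int k \<le> int s * \<lfloor>real j / real s\<rfloor> + int t - 1 \<and> c' k < c' j}) = v j"
    for k using block_inv_final_rank[of "fst (block_iter m n s t v c k)"]
    by (cases "block_iter m n s t v c k") (auto simp: Let_def)
  then show ?thesis
    using block_iter_terminates block_iter_inv unfolding tail_start_def by blast
qed

end
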